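(* Let $(T,\preceq,\Sigma,\mathcal S,\mathcal M)$ be an $(\mathcal S,\mathcal M)$-tree, $n\in\omega$, $f\in\mathcal{AM}$ with domain $T(\le n)$, and $m\in\omega$ such that either $n=0$ and $0\le m\le\tilde f(0)$, or $n>0$ and $\tilde f(n-1)<m\le\tilde f(n)$. Define $f|_m\colon T(\le n)\to T$ by $f|_m(a)=f(a)|_m$ for $a\in T(n)$ and $f|_m(a)=f(a)$ for $a\in T(<n)$. Then $f|_m\in\mathcal{AM}$, and there exists $g\in\mathcal{AM}^m_1$ such that $g\circ f|_m=f$.
   Context: A tree is a partially ordered set $(T,\preceq)$ such that for every $a\in T$ the set $\{b\in T:b\prec a\}$ is finite and linearly ordered by $\preceq$. The level of $a$ is $\ell(a)=|\{b\in T:b\prec a\}|$; $T(n)=\{a\in T:\ell(a)=n\}$, and $T(\le n)$, $T(<n)$ are defined analogously. For $a\in T$ and $n\le \ell(a)$, $a|_n$ denotes the unique predecessor of $a$ at level $n$ (with $a|_{\ell(a)}=a$). A node $b$ is an immediate successor of $a$ if $a\prec b$ and there is no $c$ with $a\prec c\prec b$. An $\mathcal S$-tree is a quadruple $(T,\preceq,\Sigma,\mathcal S)$ where $(T,\preceq)$ is a countable tree in which every node has finitely many immediate successors and $T(0)$ is finite, $\Sigma$ is a set, and $\mathcal S\colon T\times T^{<\omega}\times\Sigma\to T$ is a partial function such that: (S1) if $\mathcal S(a,\bar p,c)$ is defined then it is an immediate successor of $a$ and every entry of $\bar p$ has level at most $\ell(a)-1$; (S2) if $\mathcal S(a,\bar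 p,c)=\mathcal S(b,\bar q,d)$ then $a=b$, $\bar p=\bar q$ and $c=d$; (S3) for every $a\in T$ and every immediate successor $b$ of $a$ there are $\bar p\in T^{<\omega}$ and $c\in\Sigma$ with $b=\mathcal S(a,\bar p,c)$. For $S\subseteq T$, a map $f\colon S\to T$ is level-preserving if $\ell(a)=\ell(b)$ implies $\ell(f(a))=\ell(f(b))$; then $\tilde f(n)$ denotes $\ell(f(a))$ for any $a\in S$ with $\ell(a)=n$. An injection $F\colon T\to T$ is shape-preserving if (i) it is level-preserving; (ii) whenever $\mathcal S(a,\bar p,c)$ is defined, $\mathcal S(F(a),F(\bar p),c)$ is defined and $\mathcal S(F(a),F(\bar p),c)\preceq F(\mathcal S(a,\bar p,c))$, where $F(\bar p)$ is the tuple of images of the entries of $\bar p$; (iii) for every $a\in T(0)$ and $b\in T$ with $a\preceq b$ we have $a\preceq F(b)$. A shape-preserving $F$ skips level $m$ if $m\notin\tilde F[\omega]$, and skips only level $m$ if $\tilde F[\omega]=\omega\setminus\{m\}$. An $(\mathcal S,\mathcal M)$-tree is a quintuple $(T,\preceq,\Sigma,\mathcal S,\mathcal M)$ where $(T,\preceq,\Sigma,\mathcal S)$ is an $\mathcal S$-tree and $\mathcal M$ is a set of shape-preserving functions $T\to T$ such that: (M1) $\mathrm{Id}_T\in\mathcal M$, $\mathcal M$ is closed under composition, and whenever $(F_i)_{i\in\omega}$ is a sequence in $\mathcal M$ with $F_i\restriction T(\le i)=F_{i+1}\restriction T(\le i)$ for all $i$, there is $F_\infty\in\mathcal M$ with $F_\infty\restriction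 T(\le i)=F_i\restriction T(\le i)$ for all $i$; (M2) for every $n\in\omega$ and every $F\in\mathcal M$ with $\tilde F(n)>0$ which skips level $\tilde F(n)-1$, there are $F_1,F_2\in\mathcal M$ such that $F_2$ skips only level $\tilde F(n)-1$ and $(F_2\circ F_1)\restriction T(\le n)=F\restriction T(\le n)$; (M3) for all $n<m$ in $\omega$ there is $F^n_m\in\mathcal M$ skipping only level $m$ such that $F^n_m(b)=\mathcal S(b,\bar p,c)$ whenever $a\in T(n)$, $b\in T(m)$, $\bar p\in T^{<\omega}$, $c\in\Sigma$, $\mathcal S(a,\bar p,c)$ is defined and $\mathcal S(a,\bar p,c)\preceq b$. Notation: $\mathcal M^n=\{F\in\mathcal M: F\restriction T(<n)\text{ is the identity}\}$; $\mathcal{AM}=\{F\restriction T(<k): F\in\mathcal M,\ k>0\}$; $\mathcal{AM}^n_k=\{F\restriction T(<n+k):F\in\mathcal M^n\}$ (so elements of $\mathcal{AM}^m_1$ have domain $T(\le m)$ and are the identity on $T(<m)$). *)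

theory Defs
  imports Main "HOL-Library.FuncSet" "HOL-Library.Countable_Set"
begin

definition strict :: "('a \<Rightarrow> 'a \<Rightarrow> bool) \<Rightarrow> 'a \<Rightarrow> 'a \<Rightarrow> bool" where
  "strict le a b \<longleftrightarrow> le a b \<and> a \<noteq> b"

definition is_tree :: "'a set \<Rightarrow> ('a \<Rightarrow> 'a \<Rightarrow> bool) \<Rightarrow> bool" where
  "is_tree T le \<longleftrightarrow>
     (\<forall>a\<in>T. le a a) \<and>
     (\<forall>a\<in>T. \<forall>b\<in>T. le a b \<and> le b a \<longrightarrow> a = b) \<and>
     (\<forall>a\<in>T. \<forall>b\<in>T. \<forall>c\<in>T. le a b \<and> le b c \<longrightarrow> le a c) \<and>
     (\<forall>a\<in>T. finite {b\<in>T. strict le b a} \<and>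
        (\<forall>b\<in>T. \<forall>c\<in>T. strict le b a \<and> strict le c a \<longrightarrow> le b c \<or> le c b))"

definition lev :: "'a set \<Rightarrow> ('a \<Rightarrow> 'a \<Rightarrow> bool) \<Rightarrow> 'a \<Rightarrow> nat" where
  "lev T le a = card {b\<in>T. strict le b a}"

definition Tlev :: "'a set \<Rightarrow> ('a \<Rightarrow> 'a \<Rightarrow> bool) \<Rightarrow> nat \<Rightarrow> 'a set" where
  "Tlev T le n = {a\<in>T. lev T le a = n}"

definition Tle :: "'a set \<Rightarrow> ('a \<Rightarrow> 'a \<Rightarrow> bool) \<Rightarrow> nat \<Rightarrow> 'a set" where
  "Tle T le n = {a\<in>T. lev T le a \<le> n}"

definition Tlt :: "'a set \<Rightarrow> ('a \<Rightarrow> 'a \<Rightarrow> bool) \<Rightarrow> nat \<Rightarrow> 'a set" where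
  "Tlt T le n = {a\<in>T. lev T le a < n}"

text \<open>a|_m: the unique predecessor of a at level m (for m \<le> level of a).\<close>
definition pred_at :: "'a set \<Rightarrow> ('a \<Rightarrow> 'a \<Rightarrow> bool) \<Rightarrow> 'a \<Rightarrow> nat \<Rightarrow> 'a" where
  "pred_at T le a m = (THE b. b \<in> T \<and> le b a \<and> lev T le b = m)"

definition imm_succ :: "'a set \<Rightarrow> ('a \<Rightarrow> 'a \<Rightarrow> bool) \<Rightarrow> 'a \<Rightarrow> 'a \<Rightarrow> bool" where
  "imm_succ T le a b \<longleftrightarrow> a \<in> T \<and> b \<in> T \<and> strict le a b \<and>
     \<not> (\<exists>c\<in>T. strict le a c \<and> strict le c b)"

text \<open>The partial function S is modelled as a function into option.\<close>
definition is_S_tree :: "'a set \<Rightarrow> ('a \<Rightarrow> 'a \<Rightarrow> bool) \<Rightarrow> 'c set \<Rightarrow>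
    ('a \<Rightarrow> 'a list \<Rightarrow> 'c \<Rightarrow> 'a option) \<Rightarrow> bool" where
  "is_S_tree T le \<Sigma> S \<longleftrightarrow>
     is_tree T le \<and> countable T \<and>
     (\<forall>a\<in>T. finite {b. imm_succ T le a b}) \<and>
     finite (Tlev T le 0) \<and>
     \<comment> \<open>(S1), together with: S is only defined on T \<times> T^{<\<omega>} \<times> \<Sigma>\<close>
     (\<forall>a p c b. S a p c = Some b \<longrightarrow>
        a \<in> T \<and> set p \<subseteq> T \<and> c \<in> \<Sigma> \<and> imm_succ T le a b \<and>
        (\<forall>x\<in>set p. lev T le x + 1 \<le> lev T le a)) \<and>
     \<comment> \<open>(S2)\<close>
     (\<forall>a p c b q d. S a p c \<noteq> None \<and> S a p c = S b q d \<longrightarrow> a = b \<and> p = q \<and> c = d) \<and>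
     \<comment> \<open>(S3)\<close>
     (\<forall>a\<in>T. \<forall>b. imm_succ T le a b \<longrightarrow> (\<exists>p c. set p \<subseteq> T \<and> c \<in> \<Sigma> \<and> S a p c = Some b))"

definition level_preserving :: "'a set \<Rightarrow> ('a \<Rightarrow> 'a \<Rightarrow> bool) \<Rightarrow> 'a set \<Rightarrow> ('a \<Rightarrow> 'a) \<Rightarrow> bool" where
  "level_preserving T le D f \<longleftrightarrow>
     (\<forall>a\<in>D. \<forall>b\<in>D. lev T le a = lev T le b \<longrightarrow> lev T le (f a) = lev T le (f b))"

text \<open>\<open>tilde f n\<close> = level of f(a) for any a at level n.\<close>
definition tilde :: "'a set \<Rightarrow> ('a \<Rightarrow> 'a \<Rightarrow> bool) \<Rightarrow> ('a \<Rightarrow> 'a) \<Rightarrow> nat \<Rightarrow> nat" where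
  "tilde T le f n = lev T le (f (SOME a. a \<in> T \<and> lev T le a = n))"

definition shape_preserving :: "'a set \<Rightarrow> ('a \<Rightarrow> 'a \<Rightarrow> bool) \<Rightarrow>
    ('a \<Rightarrow> 'a list \<Rightarrow> 'c \<Rightarrow> 'a option) \<Rightarrow> ('a \<Rightarrow> 'a) \<Rightarrow> bool" where
  "shape_preserving T le S F \<longleftrightarrow>
     F \<in> extensional T \<and> F ` T \<subseteq> T \<and> inj_on F T \<and>
     level_preserving T le T F \<and>
     (\<forall>a p c b. S a p c = Some b \<longrightarrow>
        (\<exists>b'. S (F a) (map F p) c = Some b' \<and> le b' (F b))) \<and>
     (\<forall>a\<in>Tlev T le 0. \<forall>b\<in>T. le a b \<longrightarrow> le a (F b))"

definition skips :: "'a set \<Rightarrow> ('a \<Rightarrow> 'a \<Rightarrow> bool) \<Rightarrow> ('a \<Rightarrow> 'a) \<Rightarrow> nat \<Rightarrow> bool" where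
  "skips T le F m \<longleftrightarrow> m \<notin> range (tilde T le F)"

definition skips_only :: "'a set \<Rightarrow> ('a \<Rightarrow> 'a \<Rightarrow> bool) \<Rightarrow> ('a \<Rightarrow> 'a) \<Rightarrow> nat \<Rightarrow> bool" where
  "skips_only T le F m \<longleftrightarrow> range (tilde T le F) = UNIV - {m}"

text \<open>Maps T \<rightarrow> T are represented as functions extensional on T;
  composition of F and G is \<open>\<lambda>a\<in>T. F (G a)\<close>.\<close>
definition is_SM_tree :: "'a set \<Rightarrow> ('a \<Rightarrow> 'a \<Rightarrow> bool) \<Rightarrow> 'c set \<Rightarrow>
    ('a \<Rightarrow> 'a list \<Rightarrow> 'c \<Rightarrow> 'a option) \<Rightarrow> ('a \<Rightarrow> 'a) set \<Rightarrow> bool" where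
  "is_SM_tree T le \<Sigma> S M \<longleftrightarrow>
     is_S_tree T le \<Sigma> S \<and>
     (\<forall>F\<in>M. shape_preserving T le S F) \<and>
     \<comment> \<open>(M1)\<close>
     (\<lambda>a\<in>T. a) \<in> M \<and>
     (\<forall>F\<in>M. \<forall>G\<in>M. (\<lambda>a\<in>T. F (G a)) \<in> M) \<and>
     (\<forall>Fs. (\<forall>i. Fs i \<in> M) \<and> (\<forall>i. \<forall>a\<in>Tle T le i. Fs i a = Fs (Suc i) a) \<longrightarrow>
        (\<exists>F\<in>M. \<forall>i. \<forall>a\<in>Tle T le i. F a = Fs i a)) \<and>
     \<comment> \<open>(M2)\<close>
     (\<forall>n. \<forall>F\<in>M. tilde T le F n > 0 \<and> skips T le F (tilde T le F n - 1) \<longrightarrow>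
        (\<exists>F1\<in>M. \<exists>F2\<in>M. skips_only T le F2 (tilde T le F n - 1) \<and>
           (\<forall>a\<in>Tle T le n. F2 (F1 a) = F a))) \<and>
     \<comment> \<open>(M3)\<close>
     (\<forall>n m. n < m \<longrightarrow>
        (\<exists>F\<in>M. skips_only T le F m \<and>
           (\<forall>a\<in>Tlev T le n. \<forall>b\<in>Tlev T le m. \<forall>p c x.
              S a p c = Some x \<and> le x b \<longrightarrow> S b p c = Some (F b))))"

definition Mn :: "'a set \<Rightarrow> ('a \<Rightarrow> 'a \<Rightarrow> bool) \<Rightarrow> ('a \<Rightarrow> 'a) set \<Rightarrow> nat \<Rightarrow> ('a \<Rightarrow> 'a) set" where
  "Mn T le M n = {F\<in>M. \<forall>a\<in>Tlt T le n. F a = a}"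

definition AM_on :: "('a \<Rightarrow> 'a) set \<Rightarrow> 'a set \<Rightarrow> ('a \<Rightarrow> 'a) set" where
  "AM_on M D = {restrict F D | F. F \<in> M}"

definition AM :: "'a set \<Rightarrow> ('a \<Rightarrow> 'a \<Rightarrow> bool) \<Rightarrow> ('a \<Rightarrow> 'a) set \<Rightarrow> ('a \<Rightarrow> 'a) set" where
  "AM T le M = {restrict F (Tlt T le k) | F k. F \<in> M \<and> k > 0}"

definition AMnk :: "'a set \<Rightarrow> ('a \<Rightarrow> 'a \<Rightarrow> bool) \<Rightarrow> ('a \<Rightarrow> 'a) set \<Rightarrow> nat \<Rightarrow> nat \<Rightarrow> ('a \<Rightarrow> 'a) set" where
  "AMnk T le M n k = {restrict F (Tlt T le (n + k)) | F. F \<in> Mn T le M n}"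

definition cut_at :: "'a set \<Rightarrow> ('a \<Rightarrow> 'a \<Rightarrow> bool) \<Rightarrow> nat \<Rightarrow> ('a \<Rightarrow> 'a) \<Rightarrow> nat \<Rightarrow> 'a \<Rightarrow> 'a" where
  "cut_at T le n f m = (\<lambda>a\<in>Tle T le n.
     if lev T le a = n then pred_at T le (f a) m else f a)"

end

theory Submission imports Defs begin

text \<open>
  Write \<open>F\<close> for a member of \<open>\<M>\<close> extending \<open>f\<close> and \<open>k = F\<^sup>~(n)\<close>. If \<open>k = m\<close> there is nothing to do.
  Otherwise \<open>F\<close> skips level \<open>k - 1\<close>, since its level map is strictly increasing and
  \<open>F\<^sup>~(n - 1) < m\<close>; so (M2) factors \<open>F = F\<^sub>2 \<circ> F\<^sub>1\<close> on \<open>T(\<le>n)\<close> with \<open>F\<^sub>2\<close> skipping only level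
  \<open>k - 1\<close>. Such an \<open>F\<^sub>2\<close> is the identity on \<open>T(<k - 1)\<close> and moves nodes of level \<open>k - 1\<close>
  upwards, so \<open>F\<^sub>1\<close> agrees with \<open>F\<close> on \<open>T(<n)\<close>, sends \<open>T(n)\<close> to level \<open>k - 1\<close> and has the same
  predecessors at level \<open>m\<close>. Induction on \<open>k - m\<close> applied to \<open>F\<^sub>1\<close> yields \<open>G \<in> \<M>\<close> restricting to
  \<open>f|\<^sub>m\<close> and \<open>g\<^sub>1 \<in> \<M>\<^sup>m\<close> with \<open>g\<^sub>1 \<circ> G = F\<^sub>1\<close>; then \<open>g = F\<^sub>2 \<circ> g\<^sub>1\<close>.
\<close>

lemma strict_mono_range_Diff_singleton:
  fixes t :: "nat \<Rightarrow> nat"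
  assumes mono: "strict_mono t" and range: "range t = UNIV - {c}"
  shows "t i = (if i < c then i else Suc i)"
proof -
  have below: "t i = i" if "i < c" for i
    using that
  proof (induction i rule: less_induct)
    case (less i)
    have "i \<in> range t" using range less.prems by auto
    then obtain l where l: "t l = i" by auto
    have "l \<le> i" using strict_mono_imp_increasing[OF mono, of l] l by simp
    moreover have "\<not> l < i" using less.IH less.prems l by fastforce
    ultimately have "l = i" by simp
    thus ?case using l by simp
  qed
  have above: "t i = Suc i" if "c \<le> i" for i
    using that
  proof (induction i rule: dec_induct)
    case base
    have "Suc c \<in> range t" using range by auto
    then obtain l where l: "t l = Suc c" by auto
    have "c \<le> l"
    proof (rule ccontr)
      assume "\<not> c \<le> l"
      thus False using below[of l] l by simp
    qed
    hence "t c \<le> Suc c" using l strict_mono_less_eq[OF mono] by metis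
    moreover have "c \<le> t c" using strict_mono_imp_increasing[OF mono] by simp
    moreover have "t c \<noteq> c" using range by (metis Diff_iff insertI1 rangeI)
    ultimately show ?case by simp
  next
    case (step i)
    have "Suc (Suc i) \<in> range t" using range step.hyps by auto
    then obtain l where l: "t l = Suc (Suc i)" by auto
    have "i < l" using strict_mono_less[OF mono, of i l] l step.IH by simp
    hence "t (Suc i) \<le> Suc (Suc i)" using strict_mono_less_eq[OF mono, of "Suc i" l] l by simp
    moreover have "t i < t (Suc i)" using mono by (simp add: strict_mono_Suc_iff)
    ultimately show ?case using step.IH by simp
  qed
  show ?thesis using below above by simp
qed

lemma lev_image_eq_tilde:
  assumes "level_preserving T le T F" and "x \<in> T"
  shows "lev T le (F x) = tilde T le F (lev T le x)"
proof -
  let ?y = "SOME a. a \<in> T \<and> lev T le a = lev T le x"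
  have "?y \<in> T \<and> lev T le ?y = lev T le x" by (rule someI[of _ x]) (use assms in simp)
  thus ?thesis using assms unfolding level_preserving_def tilde_def by metis
qed

lemma shape_preservingD:
  assumes "shape_preserving T le S F"
  shows shape_preserving_extensional: "F \<in> extensional T"
    and shape_preserving_in: "x \<in> T \<Longrightarrow> F x \<in> T"
    and shape_preserving_level_preserving: "level_preserving T le T F"
    and shape_preserving_S:
      "S a p c = Some b \<Longrightarrow> \<exists>b'. S (F a) (map F p) c = Some b' \<and> le b' (F b)"
    and shape_preserving_root:
      "a \<in> Tlev T le 0 \<Longrightarrow> b \<in> T \<Longrightarrow> le a b \<Longrightarrow> le a (F b)"
  using assms unfolding shape_preserving_def by blast+

lemma shape_preserving_lev_image:
  "shape_preserving T le S F \<Longrightarrow> x \<in> T \<Longrightarrow> lev T le (F x) = tilde T le F (lev T le x)"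
  by (rule lev_image_eq_tilde[OF shape_preserving_level_preserving])

locale tree =
  fixes T :: "'a set" and le :: "'a \<Rightarrow> 'a \<Rightarrow> bool"
  assumes is_tree: "is_tree T le"
begin

lemma node_refl: "a \<in> T \<Longrightarrow> le a a"
  and node_antisym: "a \<in> T \<Longrightarrow> b \<in> T \<Longrightarrow> le a b \<Longrightarrow> le b a \<Longrightarrow> a = b"
  and node_trans: "a \<in> T \<Longrightarrow> b \<in> T \<Longrightarrow> c \<in> T \<Longrightarrow> le a b \<Longrightarrow> le b c \<Longrightarrow> le a c"
  and finite_strict_below: "a \<in> T \<Longrightarrow> finite {b\<in>T. strict le b a}"
  and strict_below_linear:
    "a \<in> T \<Longrightarrow> b \<in> T \<Longrightarrow> c \<in> T \<Longrightarrow> strict le b a \<Longrightarrow> strict le c a \<Longrightarrow> le b c \<or> le c b"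
  using is_tree unfolding is_tree_def by blast+

lemma lev_strict_mono:
  assumes "a \<in> T" "b \<in> T" "strict le b a"
  shows "lev T le b < lev T le a"
proof -
  have "{c\<in>T. strict le c b} \<subseteq> {c\<in>T. strict le c a}"
  proof (intro subsetI CollectI conjI)
    fix c assume c: "c \<in> {c\<in>T. strict le c b}"
    thus "c \<in> T" by simp
    have "le c a" using c node_trans[of c b a] assms by (simp add: strict_def)
    moreover have "c \<noteq> a" using c node_antisym[of a b] assms by (auto simp: strict_def)
    ultimately show "strict le c a" by (simp add: strict_def)
  qed
  moreover have "b \<in> {c\<in>T. strict le c a} - {c\<in>T. strict le c b}"
    using assms by (simp add: strict_def)
  ultimately have "{c\<in>T. strict le c b} \<subset> {c\<in>T. strict le c a}" by blast
  thus ?thesis unfolding lev_def by (rule psubset_card_mono[OF finite_strict_below[OF assms(1)]])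
qed

lemma below_level_unique:
  assumes "a \<in> T" "b \<in> T" "b' \<in> T" "le b a" "le b' a" "lev T le b = lev T le b'"
  shows "b = b'"
proof (rule ccontr)
  assume ne: "b \<noteq> b'"
  have "le b b' \<or> le b' b"
    using strict_below_linear[OF assms(1,2,3)] assms(4,5) ne by (auto simp: strict_def)
  thus False
    using lev_strict_mono[OF assms(3,2)] lev_strict_mono[OF assms(2,3)] assms(6) ne
    by (auto simp: strict_def)
qed

lemma ex_below_at_level:
  assumes "a \<in> T" "j \<le> lev T le a"
  shows "\<exists>b\<in>T. le b a \<and> lev T le b = j"
proof (cases "j = lev T le a")
  case True thus ?thesis using assms node_refl by blast
next
  case False
  define P where "P = {c\<in>T. strict le c a}"
  have "card P = lev T le a" by (simp add: P_def lev_def)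
  \<comment> \<open>the strict predecessors form a chain, on which the level is injective with values below \<open>card P\<close>\<close>
  have "inj_on (lev T le) P"
    by (rule inj_onI) (use below_level_unique[OF assms(1)] in \<open>auto simp: P_def strict_def\<close>)
  moreover have "lev T le ` P \<subseteq> {..<card P}"
    using lev_strict_mono[OF assms(1)] \<open>card P = _\<close> by (auto simp: P_def)
  ultimately have "lev T le ` P = {..<card P}"
    using card_subset_eq[OF finite_lessThan] card_image by (metis card_lessThan)
  moreover have "j < card P" using False assms(2) \<open>card P = _\<close> by simp
  ultimately have "j \<in> lev T le ` P" by simp
  then obtain b where "b \<in> P" "lev T le b = j" by blast
  thus ?thesis by (auto simp: P_def strict_def)
qed

lemma pred_at_spec:
  assumes "a \<in> T" "j \<le> lev T le a"
  shows "pred_at T le a j \<in> T \<and> le (pred_at T le a j) a \<and> lev T le (pred_at T le a j) = j"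
proof -
  have "\<exists>!b. b \<in> T \<and> le b a \<and> lev T le b = j"
    using ex_below_at_level[OF assms] below_level_unique[OF assms(1)] by metis
  thus ?thesis unfolding pred_at_def by (rule theI')
qed

lemma pred_at_unique:
  assumes "a \<in> T" "z \<in> T" "le z a" "lev T le z = j"
  shows "pred_at T le a j = z"
  unfolding pred_at_def
  by (rule the_equality) (use assms below_level_unique[OF assms(1)] in metis)+

lemma pred_at_below_eq:
  assumes "y \<in> T" "z \<in> T" "le z y" "m \<le> lev T le z"
  shows "pred_at T le y m = pred_at T le z m"
proof -
  have z: "pred_at T le z m \<in> T" "le (pred_at T le z m) z" "lev T le (pred_at T le z m) = m"
    using pred_at_spec[OF assms(2,4)] by simp_all
  hence "le (pred_at T le z m) y" using node_trans assms(1-3) by blast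
  thus ?thesis using pred_at_unique[OF assms(1) z(1)] z(3) by blast
qed

lemma ex_imm_pred:
  assumes "b \<in> T" "lev T le b = Suc j"
  shows "\<exists>a\<in>T. imm_succ T le a b \<and> lev T le a = j"
proof -
  obtain a where a: "a \<in> T" "le a b" "lev T le a = j"
    using ex_below_at_level[OF assms(1), of j] assms(2) by auto
  have "\<not> (strict le a c \<and> strict le c b)" if "c \<in> T" for c
    using lev_strict_mono[OF that a(1)] lev_strict_mono[OF assms(1) that] a(3) assms(2) by auto
  moreover have "a \<noteq> b" using a assms by auto
  ultimately show ?thesis using a assms unfolding imm_succ_def strict_def by blast
qed

end

locale S_tree =
  fixes T :: "'a set" and le :: "'a \<Rightarrow> 'a \<Rightarrow> bool" and \<Sigma> :: "'c set"
    and S :: "'a \<Rightarrow> 'a list \<Rightarrow> 'c \<Rightarrow> 'a option"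
  assumes is_S_tree: "is_S_tree T le \<Sigma> S"

sublocale S_tree \<subseteq> tree
  using is_S_tree by unfold_locales (simp add: is_S_tree_def)

context S_tree
begin

lemma S_SomeD:
  "S a p c = Some b \<Longrightarrow>
     a \<in> T \<and> set p \<subseteq> T \<and> imm_succ T le a b \<and> (\<forall>x\<in>set p. lev T le x + 1 \<le> lev T le a)"
  using is_S_tree unfolding is_S_tree_def by blast

lemma imm_succ_ex_S: "a \<in> T \<Longrightarrow> imm_succ T le a b \<Longrightarrow> \<exists>p c. S a p c = Some b"
  using is_S_tree unfolding is_S_tree_def by blast

lemma lev_image_imm_succ_less:
  assumes sp: "shape_preserving T le S F" and "imm_succ T le a b"
  shows "lev T le (F a) < lev T le (F b)"
proof -
  have "a \<in> T" using assms(2) by (simp add: imm_succ_def)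
  then obtain p c where "S a p c = Some b" using imm_succ_ex_S assms(2) by blast
  then obtain b' where b': "S (F a) (map F p) c = Some b'" "le b' (F b)"
    using shape_preserving_S[OF sp] by blast
  have "imm_succ T le (F a) b'" using S_SomeD[OF b'(1)] by blast
  hence Fa: "F a \<in> T" "b' \<in> T" "le (F a) b'" "F a \<noteq> b'" by (auto simp: imm_succ_def strict_def)
  have Fb: "F b \<in> T" using assms shape_preserving_in by (auto simp: imm_succ_def)
  have "le (F a) (F b)" using node_trans[OF Fa(1,2) Fb Fa(3) b'(2)] .
  moreover have "F a \<noteq> F b" using node_antisym[OF Fa(1,2) Fa(3)] b'(2) Fa(4) by auto
  ultimately show ?thesis using lev_strict_mono[OF Fb Fa(1)] by (simp add: strict_def)
qed

text \<open>A shape-preserving map fixing \<open>T(<j)\<close> fixes the parameters and the predecessor of every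
  node \<open>y\<close> of level \<open>j\<close>, so by (ii) it sends \<open>y\<close> above \<open>y\<close>.\<close>
lemma le_image_if_id_below:
  assumes sp: "shape_preserving T le S F" and id: "\<forall>x\<in>Tlt T le j. F x = x"
    and y: "y \<in> T" "lev T le y = j"
  shows "le y (F y)"
proof (cases j)
  case 0
  thus ?thesis using shape_preserving_root[OF sp _ y(1) node_refl[OF y(1)]] y by (simp add: Tlev_def)
next
  case (Suc i)
  obtain a where a: "a \<in> T" "imm_succ T le a y" "lev T le a = i" using ex_imm_pred y Suc by blast
  obtain p c where pc: "S a p c = Some y" using imm_succ_ex_S a by blast
  have "F a = a" using id a Suc y by (auto simp: Tlt_def)
  moreover have "map F p = p"
  proof (rule map_idI)
    fix x assume "x \<in> set p"
    hence "x \<in> Tlt T le j" using S_SomeD[OF pc] a(3) Suc by (auto simp: Tlt_def)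
    thus "F x = x" using id by blast
  qed
  ultimately show ?thesis using shape_preserving_S[OF sp pc] pc by auto
qed

lemma id_below_if_tilde_id:
  assumes sp: "shape_preserving T le S F" and "\<forall>i<j. tilde T le F i = i"
  shows "\<forall>x\<in>Tlt T le j. F x = x"
  using assms(2)
proof (induction j)
  case 0 thus ?case by (simp add: Tlt_def)
next
  case (Suc j)
  show ?case
  proof
    fix x assume x: "x \<in> Tlt T le (Suc j)"
    show "F x = x"
    proof (cases "lev T le x < j")
      case True thus ?thesis using Suc x by (simp add: Tlt_def)
    next
      case False
      hence x': "x \<in> T" "lev T le x = j" using x by (auto simp: Tlt_def)
      have Fx: "F x \<in> T" "lev T le (F x) = j"
        using shape_preserving_in[OF sp x'(1)] shape_preserving_lev_image[OF sp x'(1)] x' Suc.prems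
        by simp_all
      have "\<forall>x\<in>Tlt T le j. F x = x" using Suc by simp
      hence "le x (F x)" using le_image_if_id_below[OF sp _ x'] by blast
      thus ?thesis
        using below_level_unique[OF Fx(1) x'(1) Fx(1) _ node_refl[OF Fx(1)]] x'(2) Fx(2) by simp
    qed
  qed
qed

end

locale SM_tree =
  fixes T :: "'a set" and le :: "'a \<Rightarrow> 'a \<Rightarrow> bool" and \<Sigma> :: "'c set"
    and S :: "'a \<Rightarrow> 'a list \<Rightarrow> 'c \<Rightarrow> 'a option" and M :: "('a \<Rightarrow> 'a) set"
  assumes is_SM_tree: "is_SM_tree T le \<Sigma> S M"

sublocale SM_tree \<subseteq> S_tree
  using is_SM_tree[unfolded is_SM_tree_def, THEN conjunct1] by unfold_locales

context SM_tree
begin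

lemmas SM_axioms = is_SM_tree[unfolded is_SM_tree_def, THEN conjunct2]

lemma M_shape_preserving: "F \<in> M \<Longrightarrow> shape_preserving T le S F"
  using SM_axioms[THEN conjunct1] by blast

lemma M_id: "(\<lambda>a\<in>T. a) \<in> M"
  using SM_axioms[THEN conjunct2, THEN conjunct1] .

lemma M_comp: "F \<in> M \<Longrightarrow> G \<in> M \<Longrightarrow> (\<lambda>a\<in>T. F (G a)) \<in> M"
  using SM_axioms[THEN conjunct2, THEN conjunct2, THEN conjunct1] by blast

lemma M_factor_skipped:
  "F \<in> M \<Longrightarrow> tilde T le F n > 0 \<Longrightarrow> skips T le F (tilde T le F n - 1) \<Longrightarrow>
   \<exists>F1\<in>M. \<exists>F2\<in>M. skips_only T le F2 (tilde T le F n - 1) \<and> (\<forall>a\<in>Tle T le n. F2 (F1 a) = F a)"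
  using SM_axioms[THEN conjunct2, THEN conjunct2, THEN conjunct2, THEN conjunct2, THEN conjunct1]
  by blast

lemma M_skipping_only: "n < m \<Longrightarrow> \<exists>F\<in>M. skips_only T le F m"
  using SM_axioms[THEN conjunct2, THEN conjunct2, THEN conjunct2, THEN conjunct2, THEN conjunct2]
  by blast

text \<open>By (M3) some shape-preserving map has infinitely many level values, while a map into a
  tree of finite height has only finitely many (the junk value \<open>F undefined\<close> adds just one).\<close>
lemma level_nonempty: "\<exists>a\<in>T. lev T le a = j"
proof (rule ccontr)
  assume "\<not> (\<exists>a\<in>T. lev T le a = j)"
  hence low: "lev T le x < j" if "x \<in> T" for x
    using ex_below_at_level[OF that] by (meson not_le_imp_less)
  obtain F where F: "F \<in> M" "skips_only T le F 1" using M_skipping_only[of 0 1] by auto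
  have sp: "shape_preserving T le S F" using M_shape_preserving F(1) .
  have "tilde T le F i \<in> {..<j} \<union> {lev T le (undefined :: 'a)}" for i
  proof (cases "(SOME a. a \<in> T \<and> lev T le a = i) \<in> T")
    case True
    thus ?thesis using low shape_preserving_in[OF sp] by (simp add: tilde_def)
  next
    case False
    thus ?thesis using shape_preserving_extensional[OF sp] by (simp add: tilde_def extensional_def)
  qed
  hence "range (tilde T le F) \<subseteq> {..<j} \<union> {lev T le (undefined :: 'a)}" by blast
  hence "finite (range (tilde T le F))" by (rule finite_subset) simp
  thus False using F(2) unfolding skips_only_def by simp
qed

lemma tilde_strict_mono:
  assumes "shape_preserving T le S F"
  shows "strict_mono (tilde T le F)"
  unfolding strict_mono_Suc_iff
proof
  fix j
  obtain b where b: "b \<in> T" "lev T le b = Suc j" using level_nonempty by blast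
  then obtain a where a: "a \<in> T" "imm_succ T le a b" "lev T le a = j" using ex_imm_pred by blast
  hence "lev T le (F a) < lev T le (F b)" using lev_image_imm_succ_less[OF assms] by blast
  thus "tilde T le F j < tilde T le F (Suc j)"
    using shape_preserving_lev_image[OF assms a(1)] shape_preserving_lev_image[OF assms b(1)] a(3) b(2)
    by simp
qed

lemma lev_image_less_below_top:
  assumes "shape_preserving T le S F" "n = 0 \<or> tilde T le F (n - 1) < m" "x \<in> T" "lev T le x < n"
  shows "lev T le (F x) < m"
  using shape_preserving_lev_image[OF assms(1,3)] assms(2,4)
    strict_mono_less_eq[OF tilde_strict_mono[OF assms(1)], of "lev T le x" "n - 1"] by auto

lemma tilde_restrict:
  assumes "i \<le> n"
  shows "tilde T le (restrict F (Tle T le n)) i = tilde T le F i"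
proof -
  have "(SOME a. a \<in> T \<and> lev T le a = i) \<in> Tle T le n"
    using someI_ex[OF level_nonempty[unfolded Bex_def]] assms by (simp add: Tle_def)
  thus ?thesis unfolding tilde_def by simp
qed

lemma skips_only_tilde:
  assumes "F \<in> M" "skips_only T le F c"
  shows "tilde T le F i = (if i < c then i else Suc i)"
  using strict_mono_range_Diff_singleton[OF tilde_strict_mono[OF M_shape_preserving[OF assms(1)]]]
    assms(2) unfolding skips_only_def by blast

lemma skips_only_lev_image:
  assumes "F \<in> M" "skips_only T le F c" "x \<in> T"
  shows "lev T le (F x) = (if lev T le x < c then lev T le x else Suc (lev T le x))"
  using shape_preserving_lev_image[OF M_shape_preserving[OF assms(1)] assms(3)]
    skips_only_tilde[OF assms(1,2)] by simp

lemma skips_only_in_Mn: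
  assumes "F \<in> M" "skips_only T le F c"
  shows "F \<in> Mn T le M c"
proof -
  have "\<forall>i<c. tilde T le F i = i" using skips_only_tilde[OF assms] by simp
  thus ?thesis
    using id_below_if_tilde_id[OF M_shape_preserving[OF assms(1)]] assms(1) by (simp add: Mn_def)
qed

lemma skips_below_top:
  assumes "shape_preserving T le S F" "n = 0 \<or> tilde T le F (n - 1) < m" "m < tilde T le F n"
  shows "skips T le F (tilde T le F n - 1)"
proof -
  have "tilde T le F j \<noteq> tilde T le F n - 1" for j
    using strict_mono_less_eq[OF tilde_strict_mono[OF assms(1)], of j n]
      strict_mono_less_eq[OF tilde_strict_mono[OF assms(1)], of j "n - 1"] assms(2,3)
    by (cases "j < n") auto
  thus ?thesis unfolding skips_def by (metis rangeE)
qed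

lemma Mn_comp: "F \<in> Mn T le M k \<Longrightarrow> G \<in> Mn T le M k \<Longrightarrow> (\<lambda>a\<in>T. F (G a)) \<in> Mn T le M k"
  using M_comp by (simp add: Mn_def Tlt_def)

lemma Mn_antimono: "k \<le> k' \<Longrightarrow> Mn T le M k' \<subseteq> Mn T le M k"
  by (auto simp: Mn_def Tlt_def)

lemma lower_top_level:
  assumes F: "F \<in> M" and range: "n = 0 \<or> tilde T le F (n - 1) < m" "m < tilde T le F n"
  obtains F1 F2 where "F1 \<in> M" "F2 \<in> Mn T le M (tilde T le F n - 1)"
    "\<forall>a\<in>Tle T le n. F2 (F1 a) = F a" "\<forall>a\<in>Tlt T le n. F1 a = F a"
    "\<forall>a\<in>Tlev T le n. lev T le (F1 a) = tilde T le F n - 1"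
proof -
  define c where "c = tilde T le F n - 1"
  have sp: "shape_preserving T le S F" using M_shape_preserving F .
  obtain F1 F2 where F12: "F1 \<in> M" "F2 \<in> M" "skips_only T le F2 c"
    "\<forall>a\<in>Tle T le n. F2 (F1 a) = F a"
    using M_factor_skipped[OF F _ skips_below_top[OF sp range]] range(2) c_def by auto
  have F2_id: "\<forall>x\<in>Tlt T le c. F2 x = x" using skips_only_in_Mn[OF F12(2,3)] by (simp add: Mn_def)
  have lev_F: "lev T le (F a) = (if lev T le (F1 a) < c then lev T le (F1 a) else Suc (lev T le (F1 a)))"
    if "a \<in> T" "lev T le a \<le> n" for a
  proof -
    have "F a = F2 (F1 a)" using F12(4) that by (simp add: Tle_def)
    thus ?thesis
      using skips_only_lev_image[OF F12(2,3) shape_preserving_in[OF M_shape_preserving[OF F12(1)] that(1)]]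
      by simp
  qed
  show thesis
  proof (rule that[folded c_def, OF F12(1) skips_only_in_Mn[OF F12(2,3)] F12(4)])
    show "\<forall>a\<in>Tlt T le n. F1 a = F a"
    proof
      fix a assume "a \<in> Tlt T le n"
      hence a: "a \<in> T" "lev T le a < n" by (auto simp: Tlt_def)
      have "lev T le (F a) < m" using lev_image_less_below_top[OF sp range(1) a] .
      hence "lev T le (F1 a) < c" using lev_F[OF a(1)] a(2) range(2) c_def by (auto split: if_splits)
      thus "F1 a = F a"
        using F2_id F12(4) a shape_preserving_in[OF M_shape_preserving[OF F12(1)]]
        by (auto simp: Tlt_def Tle_def)
    qed
    show "\<forall>a\<in>Tlev T le n. lev T le (F1 a) = c"
    proof
      fix a assume "a \<in> Tlev T le n"
      hence a: "a \<in> T" "lev T le a = n" by (auto simp: Tlev_def)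
      have "lev T le (F a) = Suc c" using shape_preserving_lev_image[OF sp a(1)] a(2) range(2) c_def by simp
      thus "lev T le (F1 a) = c" using lev_F[OF a(1)] a(2) by (auto split: if_splits)
    qed
  qed
qed

lemma ex_cut_factorization:
  assumes "F \<in> M" "m \<le> tilde T le F n" "n = 0 \<or> tilde T le F (n - 1) < m"
  shows "\<exists>G\<in>M. (\<forall>a\<in>Tlt T le n. G a = F a) \<and> (\<forall>a\<in>Tlev T le n. G a = pred_at T le (F a) m) \<and>
           (\<exists>g\<in>Mn T le M m. \<forall>a\<in>Tle T le n. g (G a) = F a)"
  using assms
proof (induction "tilde T le F n - m" arbitrary: F)
  case 0
  hence sp: "shape_preserving T le S F" and m: "m = tilde T le F n"
    using M_shape_preserving by auto
  have "F a = pred_at T le (F a) m" if "a \<in> Tlev T le n" for a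
  proof -
    have a: "a \<in> T" "lev T le a = n" using that by (auto simp: Tlev_def)
    hence "F a \<in> T" "lev T le (F a) = m"
      using shape_preserving_in[OF sp] shape_preserving_lev_image[OF sp] m by auto
    thus ?thesis using pred_at_unique node_refl by metis
  qed
  moreover have "(\<lambda>a\<in>T. a) \<in> Mn T le M m" using M_id by (simp add: Mn_def Tlt_def)
  moreover have "(\<lambda>a\<in>T. a) (F a) = F a" if "a \<in> Tle T le n" for a
    using that shape_preserving_in[OF sp] by (simp add: Tle_def)
  ultimately show ?case using \<open>F \<in> M\<close> by blast
next
  case (Suc d)
  have sp: "shape_preserving T le S F" using M_shape_preserving Suc.prems(1) .
  have m_less: "m < tilde T le F n" using Suc.hyps(2) by simp
  define c where "c = tilde T le F n - 1"
  obtain F1 F2 where F1M: "F1 \<in> M" and F2Mn: "F2 \<in> Mn T le M c"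
    and factor: "\<forall>a\<in>Tle T le n. F2 (F1 a) = F a" and F1_low: "\<forall>a\<in>Tlt T le n. F1 a = F a"
    and F1_top: "\<forall>a\<in>Tlev T le n. lev T le (F1 a) = c"
    by (rule lower_top_level[OF Suc.prems(1,3) m_less, folded c_def])
  have sp1: "shape_preserving T le S F1" using M_shape_preserving F1M .
  have tilde_F1: "tilde T le F1 i = tilde T le F i" if "i < n" for i
  proof -
    obtain a where a: "a \<in> T" "lev T le a = i" using level_nonempty by blast
    hence "F1 a = F a" using F1_low that by (simp add: Tlt_def)
    thus ?thesis using shape_preserving_lev_image[OF sp1 a(1)] shape_preserving_lev_image[OF sp a(1)] a(2)
      by simp
  qed
  have "tilde T le F1 n = c"
  proof -
    obtain a where a: "a \<in> T" "lev T le a = n" using level_nonempty by blast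
    hence "lev T le (F1 a) = c" using F1_top by (simp add: Tlev_def)
    thus ?thesis using shape_preserving_lev_image[OF sp1 a(1)] a(2) by simp
  qed
  moreover have "n = 0 \<or> tilde T le F1 (n - 1) < m" using Suc.prems(3) tilde_F1[of "n - 1"] by (cases n) auto
  ultimately obtain G g1 where G: "G \<in> M" "\<forall>a\<in>Tlt T le n. G a = F1 a"
      "\<forall>a\<in>Tlev T le n. G a = pred_at T le (F1 a) m"
    and g1: "g1 \<in> Mn T le M m" "\<forall>a\<in>Tle T le n. g1 (G a) = F1 a"
    using Suc.hyps(1)[OF _ F1M] Suc.hyps(2) c_def by fastforce
  have F2M: "F2 \<in> M" and F2_id: "\<forall>x\<in>Tlt T le c. F2 x = x" using F2Mn by (auto simp: Mn_def)
  have "m \<le> c" using m_less c_def by simp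
  have "G a = pred_at T le (F a) m" if "a \<in> Tlev T le n" for a
  proof -
    have a: "a \<in> Tle T le n" "F1 a \<in> T" "lev T le (F1 a) = c"
      using that F1_top shape_preserving_in[OF sp1] by (auto simp: Tlev_def Tle_def)
    \<comment> \<open>\<open>F\<^sub>2\<close> fixes \<open>T(<c)\<close>, so it moves \<open>F\<^sub>1 a\<close> upwards without changing its predecessors\<close>
    have "le (F1 a) (F2 (F1 a))" using le_image_if_id_below[OF M_shape_preserving[OF F2M] F2_id a(2,3)] .
    moreover have "F2 (F1 a) \<in> T" using shape_preserving_in[OF M_shape_preserving[OF F2M] a(2)] .
    ultimately have "pred_at T le (F2 (F1 a)) m = pred_at T le (F1 a) m"
      using pred_at_below_eq a(2,3) \<open>m \<le> c\<close> by simp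
    thus ?thesis using G(3) that factor a(1) by simp
  qed
  moreover have "(\<lambda>a\<in>T. F2 (g1 a)) \<in> Mn T le M m"
    using Mn_comp[OF _ g1(1)] F2Mn Mn_antimono[OF \<open>m \<le> c\<close>] by auto
  moreover have "(\<lambda>a\<in>T. F2 (g1 a)) (G a) = F a" if "a \<in> Tle T le n" for a
    using that g1(2) factor shape_preserving_in[OF M_shape_preserving[OF G(1)]] by (simp add: Tle_def)
  moreover have "\<forall>a\<in>Tlt T le n. G a = F a" using G(2) F1_low by simp
  ultimately show ?case using G(1) by blast
qed

lemma cut_at_in_Tle:
  assumes F: "F \<in> M" and range: "m \<le> tilde T le F n" "n = 0 \<or> tilde T le F (n - 1) < m"
    and a: "a \<in> Tle T le n"
  shows "cut_at T le n (restrict F (Tle T le n)) m a \<in> Tle T le m"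
proof -
  have sp: "shape_preserving T le S F" using M_shape_preserving F .
  have aT: "a \<in> T" and Fa: "F a \<in> T" using a shape_preserving_in[OF sp] by (auto simp: Tle_def)
  show ?thesis
  proof (cases "lev T le a = n")
    case True
    hence "m \<le> lev T le (F a)" using shape_preserving_lev_image[OF sp aT] range(1) by simp
    thus ?thesis using True a pred_at_spec[OF Fa] by (simp add: cut_at_def Tle_def)
  next
    case False
    hence "lev T le a < n" using a by (simp add: Tle_def)
    hence "lev T le (F a) < m" using lev_image_less_below_top[OF sp range(2) aT] by blast
    thus ?thesis using False a Fa by (simp add: cut_at_def Tle_def)
  qed
qed

end

lemma cut_at_restrict_eq:
  assumes "\<forall>a\<in>Tlt T le n. G a = F a" "\<forall>a\<in>Tlev T le n. G a = pred_at T le (F a) m"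
  shows "cut_at T le n (restrict F (Tle T le n)) m = restrict G (Tlt T le (Suc n))"
proof
  fix a
  show "cut_at T le n (restrict F (Tle T le n)) m a = restrict G (Tlt T le (Suc n)) a"
    using assms by (cases "lev T le a = n") (auto simp: cut_at_def Tle_def Tlt_def Tlev_def)
qed

theorem mainTheorem7:
  fixes T :: "'a set" and le :: "'a \<Rightarrow> 'a \<Rightarrow> bool" and \<Sigma> :: "'c set"
    and S :: "'a \<Rightarrow> 'a list \<Rightarrow> 'c \<Rightarrow> 'a option" and M :: "('a \<Rightarrow> 'a) set"
    and n m :: nat and f :: "'a \<Rightarrow> 'a"
  assumes SM: "is_SM_tree T le \<Sigma> S M"
    and f_AM: "f \<in> AM T le M"
    and f_dom: "f \<in> AM_on M (Tle T le n)"
    and m_range: "(n = 0 \<and> m \<le> tilde T le f 0) \<or>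
                  (n > 0 \<and> tilde T le f (n - 1) < m \<and> m \<le> tilde T le f n)"
  shows "cut_at T le n f m \<in> AM T le M \<and>
         (\<exists>g \<in> AMnk T le M m 1. \<forall>a \<in> Tle T le n. g (cut_at T le n f m a) = f a)"
proof -
  interpret SM_tree T le \<Sigma> S M using SM by (rule SM_tree.intro)
  obtain F where F: "F \<in> M" "f = restrict F (Tle T le n)" using f_dom by (auto simp: AM_on_def)
  have range: "m \<le> tilde T le F n" "n = 0 \<or> tilde T le F (n - 1) < m"
    using m_range tilde_restrict[of 0 n F] tilde_restrict[of n n F] tilde_restrict[of "n - 1" n F] F(2)
    by auto
  obtain G g where G: "G \<in> M" "\<forall>a\<in>Tlt T le n. G a = F a" "\<forall>a\<in>Tlev T le n. G a = pred_at T le (F a) m"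
    and g: "g \<in> Mn T le M m" "\<forall>a\<in>Tle T le n. g (G a) = F a"
    using ex_cut_factorization[OF F(1) range] by blast
  have cut: "cut_at T le n f m = restrict G (Tlt T le (Suc n))"
    using cut_at_restrict_eq[OF G(2,3)] F(2) by simp
  have "cut_at T le n f m \<in> AM T le M" using cut G(1) by (auto simp: AM_def)
  moreover have "restrict g (Tlt T le (m + 1)) \<in> AMnk T le M m 1" using g(1) by (auto simp: AMnk_def)
  moreover have "restrict g (Tlt T le (m + 1)) (cut_at T le n f m a) = f a" if "a \<in> Tle T le n" for a
    using cut_at_in_Tle[OF F(1) range that] that cut g(2) F(2) by (auto simp: Tle_def Tlt_def)
  ultimately show ?thesis by blast
qed

end
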